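(* For every integer $m\ge 1$ and every integer $n$, the signed number of perfect matchings $M(\mathcal G(m,n))$ equals $T(m,n)$, where for $n\ge 1$, $T(m,n)$ is the number of domino tilings of the $m$-by-$n$ rectangle, and for $n\le 0$, $T(m,n)$ is the value obtained by extending the sequence $(T(m,n))_{n\ge1}$ backwards using a linear recurrence with constant coefficients satisfied by it (with nonzero constant coefficient). In particular $M(\mathcal G(m,0))=M(\mathcal G(m,-2))=1$.
   Context: Grid conventions: an $m$-by-$N$ grid has vertices $(i,j)$, $1\le i\le m$ (rows), $1\le j\le N$ (columns); horizontal edges join $(i,j),(i,j+1)$, vertical edges join $(i,j),(i+1,j)$. A signed graph is a graph each of whose edges carries a sign $+1$ or $-1$ (parallel edges allowed). For a signed graph $\mathcal G$, $M(\mathcal G)$ denotes the sum over all perfect matchings of $\mathcal G$ of the product of the signs of the edges in the matching (the empty graph has $M=1$). For $m\ge1$ and $n\ge 1$, $\mathcal G(m,n)$ is the $m$-by-$n$ grid graph with all edges of sign $+1$. For $n\le 0$, $\mathcal G(m,n)$ has the vertex set of the $m$-by-$(2-n)$ grid, all horizontal edges of that grid with sign $+1$, the vertical edges lying in columns $2,3,\dots,1-n$ with sign $-1$, and no vertical edges in columns $1$ and $2-n$. *)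

theory Defs
  imports Complex_Main
begin

text \<open>A signed graph is given by a vertex set V, a set E of edge labels
(so parallel edges are allowed), an endpoint map ends (each edge has a
2-element endpoint set) and a sign map sg with values +1 / -1.\<close>

definition perfect_matchings :: "'a set \<Rightarrow> 'e set \<Rightarrow> ('e \<Rightarrow> 'a set) \<Rightarrow> 'e set set" where
  "perfect_matchings V E ends =
     {F. F \<subseteq> E \<and> (\<forall>e\<in>F. \<forall>e'\<in>F. e \<noteq> e' \<longrightarrow> ends e \<inter> ends e' = {})
         \<and> \<Union>(ends ` F) = V}"

definition signed_matching_sum :: "'a set \<Rightarrow> 'e set \<Rightarrow> ('e \<Rightarrow> 'a set) \<Rightarrow> ('e \<Rightarrow> int) \<Rightarrow> int" where
  "signed_matching_sum V E ends sg = (\<Sum>F\<in>perfect_matchings V E ends. \<Prod>e\<in>F. sg e)"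

type_synonym vtx = "nat \<times> nat"   (* (row, column) *)

definition grid_verts :: "nat \<Rightarrow> nat \<Rightarrow> vtx set" where
  "grid_verts m N = {(i, j). 1 \<le> i \<and> i \<le> m \<and> 1 \<le> j \<and> j \<le> N}"

definition hor_edges :: "nat \<Rightarrow> nat \<Rightarrow> (vtx \<times> vtx) set" where
  "hor_edges m N = {((i, j), (i, j + 1)) | i j. 1 \<le> i \<and> i \<le> m \<and> 1 \<le> j \<and> j + 1 \<le> N}"

definition ver_edges :: "nat \<Rightarrow> nat set \<Rightarrow> (vtx \<times> vtx) set" where
  "ver_edges m C = {((i, j), (i + 1, j)) | i j. 1 \<le> i \<and> i + 1 \<le> m \<and> j \<in> C}"

definition edge_ends :: "vtx \<times> vtx \<Rightarrow> vtx set" where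
  "edge_ends e = {fst e, snd e}"

definition G_cols :: "int \<Rightarrow> nat" where
  "G_cols n = (if n \<ge> 1 then nat n else nat (2 - n))"

definition G_verts :: "nat \<Rightarrow> int \<Rightarrow> vtx set" where
  "G_verts m n = grid_verts m (G_cols n)"

definition G_edges :: "nat \<Rightarrow> int \<Rightarrow> (vtx \<times> vtx) set" where
  "G_edges m n =
     (if n \<ge> 1 then hor_edges m (nat n) \<union> ver_edges m {1..nat n}
      else hor_edges m (nat (2 - n)) \<union> ver_edges m {2..nat (1 - n)})"

definition G_sign :: "nat \<Rightarrow> int \<Rightarrow> vtx \<times> vtx \<Rightarrow> int" where
  "G_sign m n e = (if n \<ge> 1 then 1 else if e \<in> hor_edges m (G_cols n) then 1 else -1)"

definition MG :: "nat \<Rightarrow> int \<Rightarrow> int" where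
  "MG m n = signed_matching_sum (G_verts m n) (G_edges m n) edge_ends (G_sign m n)"

definition dominoes :: "nat \<Rightarrow> nat \<Rightarrow> vtx set set" where
  "dominoes m n = {{(i, j), (i', j')} | i j i' j'.
      (i, j) \<in> grid_verts m n \<and> (i', j') \<in> grid_verts m n \<and>
      ((i' = i \<and> j' = j + 1) \<or> (i' = i + 1 \<and> j' = j))}"

definition domino_tilings :: "nat \<Rightarrow> nat \<Rightarrow> vtx set set set" where
  "domino_tilings m n = {D. D \<subseteq> dominoes m n \<and>
      (\<forall>d\<in>D. \<forall>d'\<in>D. d \<noteq> d' \<longrightarrow> d \<inter> d' = {}) \<and> \<Union>D = grid_verts m n}"

definition T_pos :: "nat \<Rightarrow> int \<Rightarrow> int" where
  "T_pos m n = int (card (domino_tilings m (nat n)))"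

definition lin_rec_on :: "nat \<Rightarrow> (nat \<Rightarrow> real) \<Rightarrow> int set \<Rightarrow> (int \<Rightarrow> real) \<Rightarrow> bool" where
  "lin_rec_on d c K a \<longleftrightarrow>
     (\<forall>k\<in>K. a (k + int d) = (\<Sum>i<d. c i * a (k + int i)))"

definition admissible_rec :: "nat \<Rightarrow> (nat \<Rightarrow> real) \<Rightarrow> bool" where
  "admissible_rec d c \<longleftrightarrow> d \<ge> 1 \<and> c 0 \<noteq> 0"

end

(* Cut a perfect matching of the grid between consecutive columns and record the set of rows
   in which a horizontal edge crosses the cut.  Crossing a column multiplies by a transfer
   matrix indexed by the subsets of the row set R = {1..m}: the cells of the column that are
   matched across neither cut are tiled by vertical dominoes, each weighted by the sign s of
   the vertical edges in that column (transfer m s below).  Hence M(G(m,n)) = A^n({},{}) for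
   n >= 1, where A = transfer m 1, and M(G(m,-k)) = C^k(R,R), where C = transfer m (-1) (the
   first and last column of G(m,-k) carry no vertical edges).  An alternating-sum argument
   shows that B(S,T) = C(R - S, R - T) (transfer_inv m) is the inverse of A, so
   M(G(m,n)) = A^n({},{}) (transfer_entry m n) for every integer n.  As the powers of A are
   linearly dependent, this sequence satisfies a linear recurrence on all of Z with nonzero
   constant coefficient.  Consequently every recurrence with nonzero constant coefficient that
   holds for n >= 1 holds for all n, and it determines the sequence backwards. *)

theory Submission
  imports Defs "HOL-Library.Disjoint_Sets"
begin

section \<open>Linear recurrences on the integers\<close>

definition annihilates :: "(nat \<Rightarrow> 'a::comm_ring) \<Rightarrow> nat \<Rightarrow> (int \<Rightarrow> 'a) \<Rightarrow> bool" where
  "annihilates q D u \<longleftrightarrow> (\<forall>n. (\<Sum>j\<le>D. q j * u (n + int j)) = 0)"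

lemma annihilates_vanishing:
  fixes h :: "int \<Rightarrow> 'a::idom"
  assumes q0: "q 0 \<noteq> 0" and ann: "annihilates q D h" and pos: "\<forall>n\<ge>1. h n = 0"
  shows "h n = 0"
proof -
  have "\<forall>n'\<ge>k. h n' = 0" if "k \<le> 1" for k
    using that
  proof (induction k rule: int_le_induct)
    case base
    then show ?case using pos by simp
  next
    case (step k)
    have "(\<Sum>j\<le>D. q j * h (k - 1 + int j)) = 0"
      using ann unfolding annihilates_def by blast
    then have "q 0 * h (k - 1) + (\<Sum>j<D. q (Suc j) * h (k + int j)) = 0"
      by (simp add: sum.atMost_shift algebra_simps)
    moreover have "(\<Sum>j<D. q (Suc j) * h (k + int j)) = 0"
      using step.IH by simp
    ultimately have "h (k - 1) = 0"
      using q0 by simp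
    then show ?case
    proof (intro allI impI)
      fix n assume "k - 1 \<le> n"
      then consider "n = k - 1" | "k \<le> n"
        by linarith
      then show "h n = 0"
        using step.IH \<open>h (k - 1) = 0\<close> by cases auto
    qed
  qed
  from this[of "min n 1"] show ?thesis
    by simp
qed

lemma annihilates_diff:
  "annihilates q D u \<Longrightarrow> annihilates q D v \<Longrightarrow> annihilates q D (\<lambda>n. u n - v n)"
  unfolding annihilates_def by (simp add: right_diff_distrib sum_subtractf)

lemma annihilates_shift_combination:
  assumes "annihilates q D u"
  shows "annihilates q D (\<lambda>n. \<Sum>i\<le>d. p i * u (n + int i))"
  unfolding annihilates_def
proof
  fix n
  have "(\<Sum>j\<le>D. q j * (\<Sum>i\<le>d. p i * u (n + int j + int i)))
      = (\<Sum>i\<le>d. p i * (\<Sum>j\<le>D. q j * u (n + int i + int j)))"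
    by (simp add: sum_distrib_left sum.swap[of _ "{..d}"] algebra_simps)
  also have "\<dots> = 0"
    using assms unfolding annihilates_def by simp
  finally show "(\<Sum>j\<le>D. q j * (\<Sum>i\<le>d. p i * u (n + int j + int i))) = 0" .
qed

lemma lin_rec_on_subset: "lin_rec_on d c K a \<Longrightarrow> K' \<subseteq> K \<Longrightarrow> lin_rec_on d c K' a"
  unfolding lin_rec_on_def by blast

lemma lin_rec_on_cong:
  assumes "\<And>k i. k \<in> K \<Longrightarrow> i \<le> d \<Longrightarrow> a (k + int i) = b (k + int i)"
  shows "lin_rec_on d c K a \<longleftrightarrow> lin_rec_on d c K b"
proof -
  have "a (k + int d) = b (k + int d)" "(\<Sum>i<d. c i * a (k + int i)) = (\<Sum>i<d. c i * b (k + int i))"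
    if "k \<in> K" for k
    using assms that by (auto intro!: sum.cong)
  then show ?thesis
    unfolding lin_rec_on_def by simp
qed

definition rec_annihilator :: "nat \<Rightarrow> (nat \<Rightarrow> real) \<Rightarrow> nat \<Rightarrow> real" where
  "rec_annihilator d c i = (if i = d then 1 else - c i)"

lemma lin_rec_on_iff_annihilator:
  "lin_rec_on d c K a \<longleftrightarrow> (\<forall>k\<in>K. (\<Sum>i\<le>d. rec_annihilator d c i * a (k + int i)) = 0)"
proof -
  have "(\<Sum>i\<le>d. rec_annihilator d c i * a (k + int i))
      = a (k + int d) - (\<Sum>i<d. c i * a (k + int i))" for k
    unfolding lessThan_Suc_atMost[symmetric]
    by (simp add: rec_annihilator_def sum_negf)
  then show ?thesis
    unfolding lin_rec_on_def by simp
qed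

lemma lin_rec_on_UNIV_iff: "lin_rec_on d c UNIV a \<longleftrightarrow> annihilates (rec_annihilator d c) d a"
  by (simp add: lin_rec_on_iff_annihilator annihilates_def)

lemma admissible_rec_annihilator: "admissible_rec d c \<Longrightarrow> rec_annihilator d c 0 \<noteq> 0"
  unfolding admissible_rec_def rec_annihilator_def by simp

(* The defect of the recurrence is again annihilated by q; it vanishes for n \<ge> 1, hence
   everywhere. *)
lemma lin_rec_on_extend:
  assumes "q 0 \<noteq> 0" "annihilates q D u" and "admissible_rec d c" "lin_rec_on d c {1..} u"
  shows "lin_rec_on d c UNIV u"
proof -
  let ?w = "\<lambda>n. \<Sum>i\<le>d. rec_annihilator d c i * u (n + int i)"
  have "annihilates q D ?w"
    using assms(2) by (rule annihilates_shift_combination)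
  moreover have "\<forall>n\<ge>1. ?w n = 0"
    using assms(4) by (simp add: lin_rec_on_iff_annihilator)
  ultimately have "?w n = 0" for n
    using assms(1) annihilates_vanishing by blast
  then show ?thesis
    by (simp add: lin_rec_on_iff_annihilator)
qed

lemma lin_rec_on_unique:
  assumes "admissible_rec d c" "lin_rec_on d c UNIV f" "lin_rec_on d c UNIV g"
    and "\<forall>k\<ge>1. f k = g k"
  shows "f n = g n"
proof -
  have "annihilates (rec_annihilator d c) d (\<lambda>n. f n - g n)"
    using assms(2,3) by (simp add: lin_rec_on_UNIV_iff annihilates_diff)
  then have "f n - g n = 0"
    using admissible_rec_annihilator[OF assms(1)] assms(4) by (intro annihilates_vanishing) auto
  then show ?thesis
    by simp
qed

lemma lin_rec_of_annihilator:
  assumes "q D \<noteq> 0" "annihilates q D u"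
  shows "lin_rec_on D (\<lambda>i. - q i / q D) UNIV u"
  unfolding lin_rec_on_def
proof
  fix k :: int
  have "q D * u (k + int D) + (\<Sum>j<D. q j * u (k + int j)) = 0"
    using assms(2) unfolding annihilates_def lessThan_Suc_atMost[symmetric] by (simp add: add.commute)
  then show "u (k + int D) = (\<Sum>i<D. - q i / q D * u (k + int i))"
    using assms(1) by (simp add: field_simps sum_divide_distrib[symmetric] sum_negf)
qed

lemma annihilated_imp_admissible_rec:
  fixes u :: "int \<Rightarrow> real"
  assumes "q 0 \<noteq> 0" "annihilates q D u" "u n0 \<noteq> 0"
  shows "\<exists>d c. admissible_rec d c \<and> lin_rec_on d c UNIV u"
  using assms(2)
proof (induction D)
  case 0
  then have "(\<Sum>j\<le>0. q j * u (n0 + int j)) = 0"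
    unfolding annihilates_def by blast
  then have "q 0 * u n0 = 0"
    by simp
  then show ?case
    using assms(1,3) by simp
next
  case (Suc D)
  show ?case
  proof (cases "q (Suc D) = 0")
    case True
    then have "annihilates q D u"
      using Suc.prems by (simp add: annihilates_def)
    then show ?thesis
      by (rule Suc.IH)
  next
    case False
    then have "admissible_rec (Suc D) (\<lambda>i. - q i / q (Suc D))"
      using assms(1) by (simp add: admissible_rec_def)
    then show ?thesis
      using lin_rec_of_annihilator[OF False Suc.prems] by blast
  qed
qed

lemma nontrivial_relation_if_card_less:
  fixes v :: "'i \<Rightarrow> 'e \<Rightarrow> 'a::field"
  assumes "finite E" "finite I" "card E < card I"
  shows "\<exists>a. (\<exists>i\<in>I. a i \<noteq> 0) \<and> (\<forall>e\<in>E. (\<Sum>i\<in>I. a i * v i e) = 0)"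
  using assms
proof (induction E arbitrary: I v rule: finite_induct)
  case empty
  then show ?case
    by (intro exI[of _ "\<lambda>_. 1"]) (force simp: card_gt_0_iff)
next
  case (insert e0 E)
  show ?case
  proof (cases "\<forall>i\<in>I. v i e0 = 0")
    case True
    then show ?thesis
      using insert.IH[of I v] insert.prems insert.hyps by auto
  next
    case False
    then obtain i0 where i0: "i0 \<in> I" "v i0 e0 \<noteq> 0"
      by auto
    define w where "w i e = v i e - v i e0 / v i0 e0 * v i0 e" for i e
    obtain a where a: "\<exists>i\<in>I - {i0}. a i \<noteq> 0" "\<forall>e\<in>E. (\<Sum>i\<in>I - {i0}. a i * w i e) = 0"
      using insert.IH[of "I - {i0}" w] insert.prems insert.hyps i0 by (auto simp: less_diff_conv)
    define a0 where "a0 = - (\<Sum>i\<in>I - {i0}. a i * v i e0) / v i0 e0"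
    have "(\<Sum>i\<in>I. (a(i0 := a0)) i * v i e) = a0 * v i0 e + (\<Sum>i\<in>I - {i0}. a i * v i e)" for e
      using insert.prems(1) i0(1) by (simp add: sum.remove)
    moreover have "a0 * v i0 e + (\<Sum>i\<in>I - {i0}. a i * v i e) = (\<Sum>i\<in>I - {i0}. a i * w i e)" for e
      unfolding w_def a0_def
      by (simp add: algebra_simps sum_subtractf sum_distrib_left sum_distrib_right sum_divide_distrib)
    ultimately have "(\<Sum>i\<in>I. (a(i0 := a0)) i * v i e) = 0" if "e \<in> insert e0 E" for e
      using that a(2) i0(2) by (auto simp: w_def)
    moreover have "\<exists>i\<in>I. (a(i0 := a0)) i \<noteq> 0"
      using a(1) by auto
    ultimately show ?thesis
      by blast
  qed
qed

lemma annihilates_drop_zero_coeff: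
  assumes "q 0 = 0" "annihilates q (Suc D) u"
  shows "annihilates (\<lambda>j. q (Suc j)) D u"
  unfolding annihilates_def
proof
  fix n
  have "(\<Sum>j\<le>Suc D. q j * u (n - 1 + int j)) = 0"
    using assms(2) unfolding annihilates_def by blast
  then have "q 0 * u (n - 1) + (\<Sum>j\<le>D. q (Suc j) * u (n - 1 + int (Suc j))) = 0"
    by (simp only: sum.atMost_Suc_shift of_nat_0 add_0_right)
  then show "(\<Sum>j\<le>D. q (Suc j) * u (n + int j)) = 0"
    using assms(1) by simp
qed

lemma annihilates_normalize:
  assumes "j \<le> D" "q j \<noteq> 0" "annihilates q D u"
  shows "\<exists>p D'. p 0 \<noteq> 0 \<and> annihilates p D' u"
  using assms
proof (induction j arbitrary: q D)
  case 0
  then show ?case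
    by blast
next
  case (Suc j)
  show ?case
  proof (cases "q 0 = 0")
    case True
    obtain D' where "D = Suc D'"
      using Suc.prems(1) by (cases D) auto
    then show ?thesis
      using Suc.IH[of D' "\<lambda>j. q (Suc j)"] annihilates_drop_zero_coeff True Suc.prems by auto
  next
    case False
    then show ?thesis
      using Suc.prems(3) by blast
  qed
qed

lemma annihilated_if_finite_rank:
  fixes u :: "int \<Rightarrow> 'a::field"
  assumes "finite I" and rank: "\<And>n j. u (n + int j) = (\<Sum>i\<in>I. x n i * y j i)"
  shows "\<exists>q D. q 0 \<noteq> 0 \<and> annihilates q D u"
proof -
  obtain a where a: "\<exists>j\<in>{..card I}. a j \<noteq> 0" "\<forall>i\<in>I. (\<Sum>j\<in>{..card I}. a j * y j i) = 0"
    using nontrivial_relation_if_card_less[of I "{..card I}" "\<lambda>j i. y j i"] assms(1) by auto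
  have "annihilates a (card I) u"
    unfolding annihilates_def
  proof
    fix n
    have "(\<Sum>j\<le>card I. a j * u (n + int j)) = (\<Sum>i\<in>I. x n i * (\<Sum>j\<le>card I. a j * y j i))"
      by (simp add: rank sum_distrib_left sum.swap[of _ "{..card I}"] algebra_simps)
    also have "\<dots> = 0"
      using a(2) by simp
    finally show "(\<Sum>j\<le>card I. a j * u (n + int j)) = 0" .
  qed
  then show ?thesis
    using a(1) annihilates_normalize by blast
qed

section \<open>Matrices indexed by a finite set\<close>

(* A square matrix with rows and columns indexed by the set I is a function on I \<times> I;
   the operations below set all entries outside I \<times> I to 0. *)
type_synonym ('i, 'a) sq_matrix = "'i \<Rightarrow> 'i \<Rightarrow> 'a"

definition mat_mult :: "'i set \<Rightarrow> ('i, 'a::comm_semiring_1) sq_matrix \<Rightarrow> ('i, 'a) sq_matrix \<Rightarrow> ('i, 'a) sq_matrix"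
  where
  "mat_mult I X Y = (\<lambda>S U. if S \<in> I \<and> U \<in> I then (\<Sum>T\<in>I. X S T * Y T U) else 0)"

definition mat_one :: "'i set \<Rightarrow> ('i, 'a::comm_semiring_1) sq_matrix" where
  "mat_one I = (\<lambda>S U. if S \<in> I \<and> S = U then 1 else 0)"

primrec mat_pow :: "'i set \<Rightarrow> ('i, 'a::comm_semiring_1) sq_matrix \<Rightarrow> nat \<Rightarrow> ('i, 'a) sq_matrix" where
  "mat_pow I X 0 = mat_one I"
| "mat_pow I X (Suc k) = mat_mult I (mat_pow I X k) X"

definition supported_on :: "'i set \<Rightarrow> ('i, 'a::zero) sq_matrix \<Rightarrow> bool" where
  "supported_on I X \<longleftrightarrow> (\<forall>S U. S \<notin> I \<or> U \<notin> I \<longrightarrow> X S U = 0)"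

lemma supported_on_mat_pow: "supported_on I (mat_pow I X k)"
  by (cases k) (auto simp: supported_on_def mat_one_def mat_mult_def)

lemma mat_mult_assoc: "mat_mult I (mat_mult I X Y) Z = mat_mult I X (mat_mult I Y Z)"
proof (intro ext)
  fix S U
  show "mat_mult I (mat_mult I X Y) Z S U = mat_mult I X (mat_mult I Y Z) S U"
  proof (cases "S \<in> I \<and> U \<in> I")
    case True
    have "mat_mult I (mat_mult I X Y) Z S U = (\<Sum>T\<in>I. \<Sum>V\<in>I. X S V * Y V T * Z T U)"
      using True unfolding mat_mult_def by (auto simp: sum_distrib_right intro!: sum.cong)
    also have "\<dots> = (\<Sum>V\<in>I. X S V * (\<Sum>T\<in>I. Y V T * Z T U))"
      by (subst sum.swap) (simp add: sum_distrib_left mult.assoc)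
    also have "\<dots> = mat_mult I X (mat_mult I Y Z) S U"
      using True unfolding mat_mult_def by (auto intro!: sum.cong)
    finally show ?thesis .
  qed (auto simp: mat_mult_def)
qed

lemma mat_mult_one_right:
  assumes "finite I" "supported_on I X"
  shows "mat_mult I X (mat_one I) = X"
proof (intro ext)
  fix S U
  show "mat_mult I X (mat_one I) S U = X S U"
  proof (cases "S \<in> I \<and> U \<in> I")
    case True
    then have "mat_mult I X (mat_one I) S U = (\<Sum>T\<in>I. if T = U then X S T else 0)"
      unfolding mat_mult_def mat_one_def by (auto intro!: sum.cong)
    then show ?thesis
      using True assms(1) by (simp add: sum.delta')
  qed (use assms(2) in \<open>auto simp: supported_on_def mat_mult_def\<close>)
qed

definition mat_zpow ::
  "'i set \<Rightarrow> ('i, 'a::comm_semiring_1) sq_matrix \<Rightarrow> ('i, 'a) sq_matrix \<Rightarrow> int \<Rightarrow> ('i, 'a) sq_matrix"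
  where
  "mat_zpow I A B n = (if n \<ge> 0 then mat_pow I A (nat n) else mat_pow I B (nat (- n)))"

lemma mat_zpow_Suc:
  assumes "finite I" "mat_mult I B A = mat_one I"
  shows "mat_zpow I A B (n + 1) = mat_mult I (mat_zpow I A B n) A"
proof (cases "n \<ge> 0")
  case True
  then have "nat (n + 1) = Suc (nat n)"
    by simp
  then show ?thesis
    using True unfolding mat_zpow_def by simp
next
  case False
  then have "nat (- n) = Suc (nat (- (n + 1)))"
    by simp
  then have "mat_mult I (mat_zpow I A B n) A = mat_pow I B (nat (- (n + 1)))"
    using False assms
    by (simp add: mat_zpow_def mat_mult_assoc mat_mult_one_right supported_on_mat_pow)
  then show ?thesis
    using False by (simp add: mat_zpow_def)
qed

lemma mat_zpow_add:
  assumes "finite I" "mat_mult I B A = mat_one I"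
  shows "mat_zpow I A B (n + int j) = mat_mult I (mat_zpow I A B n) (mat_pow I A j)"
proof (induction j)
  case 0
  show ?case
    using assms(1) by (simp add: mat_mult_one_right mat_zpow_def supported_on_mat_pow)
next
  case (Suc j)
  have "mat_zpow I A B (n + int (Suc j)) = mat_mult I (mat_zpow I A B (n + int j)) A"
    using mat_zpow_Suc[OF assms, of "n + int j"] by (simp add: ac_simps)
  then show ?case
    by (simp add: Suc.IH mat_mult_assoc)
qed

lemma mat_zpow_entry_add:
  assumes "finite I" "mat_mult I B A = mat_one I" "i \<in> I"
  shows "mat_zpow I A B (n + int j) i i = (\<Sum>k\<in>I. mat_zpow I A B n i k * mat_pow I A j k i)"
  using assms by (simp add: mat_zpow_add mat_mult_def)

section \<open>Perfect matchings\<close>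

lemma perfect_matchings_iff:
  "F \<in> perfect_matchings V E ends \<longleftrightarrow> F \<subseteq> E \<and> disjoint_family_on ends F \<and> \<Union>(ends ` F) = V"
  unfolding perfect_matchings_def disjoint_family_on_def by simp

lemma perfect_matchings_restrict_edges:
  "perfect_matchings V E ends = perfect_matchings V {e \<in> E. ends e \<subseteq> V} ends"
  by (intro set_eqI) (auto simp: perfect_matchings_iff)

lemma sum_perfect_matchings_subgraph:
  fixes f :: "'e \<Rightarrow> 'a::comm_semiring_1"
  assumes "finite E" "E' \<subseteq> E"
  shows "(\<Sum>F\<in>perfect_matchings V E' ends. \<Prod>e\<in>F. f e)
    = (\<Sum>F\<in>perfect_matchings V E ends. \<Prod>e\<in>F. if e \<in> E' then f e else 0)"
proof -
  have "perfect_matchings V E ends \<subseteq> Pow E"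
    by (auto simp: perfect_matchings_iff)
  then have fin: "finite (perfect_matchings V E ends)"
    using assms(1) by (simp add: finite_subset)
  have "perfect_matchings V E' ends = {F \<in> perfect_matchings V E ends. F \<subseteq> E'}"
    unfolding set_eq_iff perfect_matchings_iff mem_Collect_eq using assms(2) by blast
  moreover have "(\<Prod>e\<in>F. if e \<in> E' then f e else 0) = 0"
    if "F \<in> perfect_matchings V E ends" "\<not> F \<subseteq> E'" for F
  proof (rule prod_zero)
    show "finite F"
      using that(1) assms(1) by (auto simp: perfect_matchings_iff intro: finite_subset)
  qed (use that(2) in auto)
  ultimately show ?thesis
    using fin by (auto intro!: sum.mono_neutral_cong_left prod.cong)
qed

lemma disjoint_family_on_Un:
  assumes "disjoint_family_on f A" "disjoint_family_on f B" "\<Union>(f ` A) \<inter> \<Union>(f ` B) = {}"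
  shows "disjoint_family_on f (A \<union> B)"
  using assms unfolding disjoint_family_on_def by blast

lemma disjoint_family_on_common_elem:
  "disjoint_family_on f A \<Longrightarrow> a \<in> A \<Longrightarrow> b \<in> A \<Longrightarrow> x \<in> f a \<Longrightarrow> x \<in> f b
    \<Longrightarrow> a = b"
  unfolding disjoint_family_on_def by blast

lemma bij_betw_perfect_matchings_image:
  assumes "inj_on ends E"
  shows "bij_betw ((`) ends) (perfect_matchings V E ends) {D. D \<subseteq> ends ` E \<and> disjoint D \<and> \<Union>D = V}"
proof (rule bij_betw_imageI)
  show "inj_on ((`) ends) (perfect_matchings V E ends)"
    using inj_on_image_eq_iff[OF assms] by (auto simp: perfect_matchings_iff inj_on_def)
  show "(`) ends ` perfect_matchings V E ends = {D. D \<subseteq> ends ` E \<and> disjoint D \<and> \<Union>D = V}"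
  proof (intro equalityI subsetI)
    fix D assume "D \<in> (`) ends ` perfect_matchings V E ends"
    then obtain F where "F \<in> perfect_matchings V E ends" "D = ends ` F"
      by blast
    then show "D \<in> {D. D \<subseteq> ends ` E \<and> disjoint D \<and> \<Union>D = V}"
      by (auto simp: perfect_matchings_iff disjoint_family_on_disjoint_image)
  next
    fix D assume D: "D \<in> {D. D \<subseteq> ends ` E \<and> disjoint D \<and> \<Union>D = V}"
    define F where "F = {e \<in> E. ends e \<in> D}"
    have image: "ends ` F = D"
      using D unfolding F_def by blast
    have "inj_on ends F"
      using assms unfolding F_def by (rule inj_on_subset) auto
    then have "disjoint_family_on ends F"
      using D image by (intro disjoint_image_disjoint_family_on) auto
    then have "F \<in> perfect_matchings V E ends"
      using D image unfolding perfect_matchings_iff by (auto simp: F_def)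
    then show "D \<in> (`) ends ` perfect_matchings V E ends"
      using image by blast
  qed
qed

section \<open>Vertical tilings of a column and the transfer matrices\<close>

(* A tiling of a set X of rows of one column by vertical dominoes {i, i+1} is recorded
   by the set P of the top rows of its dominoes. *)
definition column_tilings :: "nat set \<Rightarrow> nat set set" where
  "column_tilings X = {P. P \<union> Suc ` P = X \<and> P \<inter> Suc ` P = {}}"

lemma column_tilings_subset: "P \<in> column_tilings X \<Longrightarrow> P \<subseteq> X"
  unfolding column_tilings_def by auto

lemma finite_column_tilings: "finite X \<Longrightarrow> finite (column_tilings X)"
  using column_tilings_subset by (metis Pow_iff finite_Pow_iff finite_subset subsetI)

lemma empty_in_column_tilings_iff: "{} \<in> column_tilings X \<longleftrightarrow> X = {}"
  unfolding column_tilings_def by auto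

lemma column_tilings_empty: "column_tilings {} = {{}}"
  unfolding column_tilings_def by auto

(* The weight of one column of height m whose rows S are matched to the left and whose
   rows T are matched to the right; the other rows are tiled by vertical dominoes of weight s. *)
definition transfer :: "nat \<Rightarrow> real \<Rightarrow> nat set \<Rightarrow> nat set \<Rightarrow> real" where
  "transfer m s S T = (if S \<subseteq> {1..m} \<and> T \<subseteq> {1..m} \<and> S \<inter> T = {}
     then (\<Sum>P\<in>column_tilings ({1..m} - S - T). s ^ card P) else 0)"

definition transfer_inv :: "nat \<Rightarrow> nat set \<Rightarrow> nat set \<Rightarrow> real" where
  "transfer_inv m S T = (if S \<subseteq> {1..m} \<and> T \<subseteq> {1..m}
     then transfer m (-1) ({1..m} - S) ({1..m} - T) else 0)"

lemma transfer_sym: "transfer m s S T = transfer m s T S"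
  unfolding transfer_def by (simp add: Int_commute Diff_eq Int_ac)

lemma transfer_inv_sym: "transfer_inv m S T = transfer_inv m T S"
  unfolding transfer_inv_def using transfer_sym by metis

lemma transfer_zero:
  "transfer m 0 S T
    = (if S \<subseteq> {1..m} \<and> T \<subseteq> {1..m} \<and> S \<inter> T = {} \<and> {1..m} \<subseteq> S \<union> T then 1 else 0)"
proof -
  have "(\<Sum>P\<in>column_tilings X. (0::real) ^ card P) = (if X = {} then 1 else 0)" if "finite X" for X
  proof -
    have "(\<Sum>P\<in>column_tilings X. (0::real) ^ card P) = (\<Sum>P\<in>column_tilings X. if P = {} then 1 else 0)"
      using that column_tilings_subset finite_subset by (intro sum.cong) fastforce+
    then show ?thesis
      using that by (simp add: finite_column_tilings empty_in_column_tilings_iff)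
  qed
  then show ?thesis
    unfolding transfer_def by auto
qed

lemma sum_Pow_neg_one_power:
  assumes "finite P"
  shows "(\<Sum>Q\<in>Pow P. (-1::'a::comm_ring_1) ^ card Q) = (if P = {} then 1 else 0)"
proof -
  have "(\<Prod>x\<in>P. (1::'a) - 1) = (\<Sum>Q\<in>Pow P. (-1) ^ card Q * (\<Prod>x\<in>Q. 1) * (\<Prod>x\<in>P - Q. 1))"
    by (rule prod_diff_conv_sum[OF assms])
  then show ?thesis
    using assms by (simp add: power_0_left)
qed

lemma column_tilings_Un:
  assumes "P \<in> column_tilings X" "Q \<in> column_tilings Y" "X \<inter> Y = {}"
  shows "P \<union> Q \<in> column_tilings (X \<union> Y)"
proof -
  have "P \<union> Suc ` P = X" "P \<inter> Suc ` P = {}" "Q \<union> Suc ` Q = Y" "Q \<inter> Suc ` Q = {}"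
    using assms(1,2) unfolding column_tilings_def by auto
  then have "(P \<union> Q) \<union> Suc ` (P \<union> Q) = X \<union> Y" "(P \<union> Q) \<inter> Suc ` (P \<union> Q) = {}"
    using assms(3) by blast+
  then show ?thesis
    unfolding column_tilings_def by simp
qed

lemma column_tilings_Diff:
  assumes "P \<in> column_tilings X" "Q \<subseteq> P"
  shows "P - Q \<in> column_tilings (X - (Q \<union> Suc ` Q))"
proof -
  have "P \<union> Suc ` P = X" "P \<inter> Suc ` P = {}"
    using assms(1) unfolding column_tilings_def by auto
  then have "(P - Q) \<union> Suc ` (P - Q) = X - (Q \<union> Suc ` Q)" "(P - Q) \<inter> Suc ` (P - Q) = {}"
    using assms(2) by (auto simp: image_iff)
  then show ?thesis
    unfolding column_tilings_def by simp
qed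

lemma column_tilings_subset_tiling:
  "P \<in> column_tilings X \<Longrightarrow> Q \<subseteq> P \<Longrightarrow> Q \<in> column_tilings (Q \<union> Suc ` Q)"
  unfolding column_tilings_def by auto

(* Choosing T, a tiling P1 of R - S - T and a tiling Q of T \<inter> U amounts to choosing the
   tiling P = P1 \<union> Q of U - S together with its subset Q, which then determines
   T = (R - U) \<union> Q \<union> Suc ` Q. *)
lemma bij_betw_column_tiling_pairs:
  assumes "S \<subseteq> U" "U \<subseteq> R"
  defines "A \<equiv> SIGMA T:{T. T \<subseteq> R \<and> S \<inter> T = {} \<and> R \<subseteq> T \<union> U}.
    column_tilings (R - S - T) \<times> column_tilings (T \<inter> U)"
  shows "bij_betw (\<lambda>(T, P1, Q). (P1 \<union> Q, Q)) A (SIGMA P:column_tilings (U - S). Pow P)"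
proof -
  have forward: "P1 \<union> Q \<in> column_tilings (U - S) \<and> (R - U) \<union> Q \<union> Suc ` Q = T \<and> (P1 \<union> Q) - Q = P1"
    if "(T, P1, Q) \<in> A" for T P1 Q
  proof -
    have T: "T \<subseteq> R" "S \<inter> T = {}" "R \<subseteq> T \<union> U"
      and P1: "P1 \<in> column_tilings (R - S - T)" and Q: "Q \<in> column_tilings (T \<inter> U)"
      using that unfolding A_def by auto
    have "Q \<union> Suc ` Q = T \<inter> U"
      using Q unfolding column_tilings_def by auto
    moreover have "P1 \<inter> Q = {}"
      using column_tilings_subset[OF P1] column_tilings_subset[OF Q] by auto
    moreover have "R - S - T \<union> T \<inter> U = U - S"
      using T assms by auto
    ultimately show ?thesis
      using column_tilings_Un[OF P1 Q] T by auto
  qed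
  have backward: "((R - U) \<union> Q \<union> Suc ` Q, P - Q, Q) \<in> A \<and> (P - Q) \<union> Q = P"
    if "P \<in> column_tilings (U - S)" "Q \<subseteq> P" for P Q
  proof -
    have Q_cover: "Q \<union> Suc ` Q \<subseteq> U - S"
      using that unfolding column_tilings_def by auto
    have "U - S - (Q \<union> Suc ` Q) = R - S - ((R - U) \<union> Q \<union> Suc ` Q)"
      and "((R - U) \<union> Q \<union> Suc ` Q) \<inter> U = Q \<union> Suc ` Q"
      using Q_cover assms by auto
    then show ?thesis
      using Q_cover assms that column_tilings_Diff[OF that] column_tilings_subset_tiling[OF that]
      unfolding A_def by auto
  qed
  show ?thesis
    by (rule bij_betw_byWitness[where f' = "\<lambda>(P, Q). ((R - U) \<union> Q \<union> Suc ` Q, P - Q, Q)"])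
      (use forward backward in \<open>fastforce+\<close>)
qed

lemma sum_column_tilings_split:
  assumes "finite R" "S \<subseteq> U" "U \<subseteq> R"
  shows "(\<Sum>T\<in>{T. T \<subseteq> R \<and> S \<inter> T = {} \<and> R \<subseteq> T \<union> U}.
            \<Sum>P1\<in>column_tilings (R - S - T). \<Sum>Q\<in>column_tilings (T \<inter> U). g Q)
       = (\<Sum>P\<in>column_tilings (U - S). \<Sum>Q\<in>Pow P. g Q)"
proof -
  define Ts where "Ts = {T. T \<subseteq> R \<and> S \<inter> T = {} \<and> R \<subseteq> T \<union> U}"
  have fin: "finite (column_tilings X)" if "X \<subseteq> R" for X
    using assms(1) that finite_subset finite_column_tilings by blast
  have "finite Ts"
    unfolding Ts_def using assms(1) by (simp add: Collect_conj_eq flip: Pow_def)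
  have "(\<Sum>T\<in>Ts. \<Sum>P1\<in>column_tilings (R - S - T). \<Sum>Q\<in>column_tilings (T \<inter> U). g Q)
      = (\<Sum>T\<in>Ts. \<Sum>(P1, Q)\<in>column_tilings (R - S - T) \<times> column_tilings (T \<inter> U). g Q)"
    by (simp add: sum.cartesian_product)
  also have "\<dots> = (\<Sum>(T, P1, Q)\<in>(SIGMA T:Ts. column_tilings (R - S - T) \<times> column_tilings (T \<inter> U)). g Q)"
    using \<open>finite Ts\<close> assms(3) by (intro sum.Sigma) (auto intro!: fin)
  also have "\<dots> = (\<Sum>(P, Q)\<in>(SIGMA P:column_tilings (U - S). Pow P). g Q)"
    using sum.reindex_bij_betw[OF bij_betw_column_tiling_pairs[OF assms(2,3)], of "\<lambda>(P, Q). g Q"]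
    unfolding Ts_def by (simp add: case_prod_unfold)
  also have "\<dots> = (\<Sum>P\<in>column_tilings (U - S). \<Sum>Q\<in>Pow P. g Q)"
    using assms(1,3) column_tilings_subset
    by (intro sum.Sigma[symmetric]) (auto intro!: fin, meson Diff_subset finite_subset order_trans)
  finally show ?thesis
    unfolding Ts_def .
qed

lemma transfer_times_transfer_inv:
  assumes "S \<subseteq> {1..m}" "T \<subseteq> {1..m}" "U \<subseteq> {1..m}"
  shows "transfer m 1 S T * transfer_inv m T U = (if S \<inter> T = {} \<and> {1..m} \<subseteq> T \<union> U
    then (\<Sum>P1\<in>column_tilings ({1..m} - S - T). \<Sum>Q\<in>column_tilings (T \<inter> U). (-1::real) ^ card Q)
    else 0)"
proof -
  define R where "R = {1..m}"
  have "R - (R - T) - (R - U) = T \<inter> U" "(R - T) \<inter> (R - U) = {} \<longleftrightarrow> R \<subseteq> T \<union> U"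
    using assms(2,3) unfolding R_def by auto
  then have "transfer_inv m T U
      = (if R \<subseteq> T \<union> U then (\<Sum>Q\<in>column_tilings (T \<inter> U). (-1) ^ card Q) else 0)"
    using assms(2,3) unfolding transfer_inv_def transfer_def R_def[symmetric] by auto
  moreover have "transfer m 1 S T = (if S \<inter> T = {} then (\<Sum>P1\<in>column_tilings (R - S - T). 1) else 0)"
    using assms(1,2) unfolding transfer_def R_def[symmetric] by simp
  ultimately show ?thesis
    unfolding R_def[symmetric] by (simp add: sum_distrib_right)
qed

(* After the regrouping of bij_betw_column_tiling_pairs, the alternating sum over the subsets Q
   of P cancels unless P = {}, that is, unless S = U. *)
lemma transfer_transfer_inv_entry:
  assumes "S \<subseteq> {1..m}" "U \<subseteq> {1..m}"
  shows "(\<Sum>T\<in>Pow {1..m}. transfer m 1 S T * transfer_inv m T U) = (if S = U then 1 else 0)"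
proof -
  define R where "R = {1..m}"
  have SR: "S \<subseteq> R" and UR: "U \<subseteq> R" and "finite R"
    using assms unfolding R_def by auto
  have entry: "transfer m 1 S T * transfer_inv m T U = (if S \<inter> T = {} \<and> R \<subseteq> T \<union> U
      then (\<Sum>P1\<in>column_tilings (R - S - T). \<Sum>Q\<in>column_tilings (T \<inter> U). (-1::real) ^ card Q)
      else 0)" if "T \<subseteq> R" for T
    using transfer_times_transfer_inv[of S m T U] assms that unfolding R_def by blast
  have "(\<Sum>T\<in>Pow R. transfer m 1 S T * transfer_inv m T U)
      = (\<Sum>T\<in>{T. T \<subseteq> R \<and> S \<inter> T = {} \<and> R \<subseteq> T \<union> U}.
           \<Sum>P1\<in>column_tilings (R - S - T). \<Sum>Q\<in>column_tilings (T \<inter> U). (-1::real) ^ card Q)"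
    using \<open>finite R\<close> by (simp add: entry sum.inter_filter[symmetric] Pow_def conj_assoc)
  also have "\<dots> = (if S = U then 1 else 0)"
  proof (cases "S \<subseteq> U")
    case True
    have "finite (column_tilings (U - S))"
      using \<open>finite R\<close> UR by (meson Diff_subset finite_column_tilings finite_subset order_trans)
    moreover have "finite P" if "P \<in> column_tilings (U - S)" for P
      using that column_tilings_subset UR \<open>finite R\<close> by (meson Diff_subset finite_subset order_trans)
    moreover have "(\<Sum>T\<in>{T. T \<subseteq> R \<and> S \<inter> T = {} \<and> R \<subseteq> T \<union> U}.
           \<Sum>P1\<in>column_tilings (R - S - T). \<Sum>Q\<in>column_tilings (T \<inter> U). (-1::real) ^ card Q)
        = (\<Sum>P\<in>column_tilings (U - S). \<Sum>Q\<in>Pow P. (-1::real) ^ card Q)"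
      using \<open>finite R\<close> True UR by (rule sum_column_tilings_split)
    ultimately show ?thesis
      using True by (simp add: sum_Pow_neg_one_power sum.delta' empty_in_column_tilings_iff)
  next
    case False
    then have "{T. T \<subseteq> R \<and> S \<inter> T = {} \<and> R \<subseteq> T \<union> U} = {}" "S \<noteq> U"
      using SR by auto
    then show ?thesis
      by (simp only: sum.empty if_False)
  qed
  finally show ?thesis
    unfolding R_def .
qed

lemma transfer_mult_transfer_inv:
  "mat_mult (Pow {1..m}) (transfer m 1) (transfer_inv m) = mat_one (Pow {1..m})"
proof (intro ext)
  fix S U
  show "mat_mult (Pow {1..m}) (transfer m 1) (transfer_inv m) S U = mat_one (Pow {1..m}) S U"
  proof (cases "S \<subseteq> {1..m} \<and> U \<subseteq> {1..m}")
    case True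
    then show ?thesis
      using transfer_transfer_inv_entry[of S m U] by (simp add: mat_mult_def mat_one_def)
  qed (auto simp: mat_mult_def mat_one_def)
qed

lemma transfer_inv_mult_transfer:
  "mat_mult (Pow {1..m}) (transfer_inv m) (transfer m 1) = mat_one (Pow {1..m})"
proof (intro ext)
  fix S U
  have "mat_mult (Pow {1..m}) (transfer_inv m) (transfer m 1) S U
      = mat_mult (Pow {1..m}) (transfer m 1) (transfer_inv m) U S"
    unfolding mat_mult_def by (simp add: transfer_sym transfer_inv_sym mult.commute conj_commute)
  also have "\<dots> = mat_one (Pow {1..m}) U S"
    by (simp only: transfer_mult_transfer_inv)
  also have "\<dots> = mat_one (Pow {1..m}) S U"
    by (auto simp: mat_one_def)
  finally show "mat_mult (Pow {1..m}) (transfer_inv m) (transfer m 1) S U = mat_one (Pow {1..m}) S U" .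
qed

section \<open>Cutting a matching of the grid after its last column\<close>

lemma finite_hor_edges: "finite (hor_edges m N)"
proof -
  have "hor_edges m N \<subseteq> (\<lambda>(i, j). ((i, j), (i, j + 1))) ` ({1..m} \<times> {1..N})"
    unfolding hor_edges_def by auto
  then show ?thesis
    by (rule finite_subset) auto
qed

lemma finite_ver_edges: "finite C \<Longrightarrow> finite (ver_edges m C)"
proof -
  assume "finite C"
  have "ver_edges m C \<subseteq> (\<lambda>(i, j). ((i, j), (i + 1, j))) ` ({1..m} \<times> C)"
    unfolding ver_edges_def by auto
  then show ?thesis
    by (rule finite_subset) (use \<open>finite C\<close> in auto)
qed

definition covered :: "(vtx \<times> vtx) set \<Rightarrow> vtx set" where
  "covered F = \<Union>(edge_ends ` F)"

lemma covered_iff: "x \<in> covered F \<longleftrightarrow> (\<exists>e\<in>F. x = fst e \<or> x = snd e)"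
  unfolding covered_def edge_ends_def by auto

lemma covered_Un: "covered (F \<union> G) = covered F \<union> covered G"
  unfolding covered_def by auto

(* Matchings of the first N columns of the m-row grid in which, in addition, the cells of
   column N + 1 in the rows S are covered, necessarily by horizontal edges from column N. *)
definition partial_matchings :: "nat \<Rightarrow> nat \<Rightarrow> nat set \<Rightarrow> (vtx \<times> vtx) set set" where
  "partial_matchings m N S = perfect_matchings (grid_verts m N \<union> {(i, Suc N) | i. i \<in> S})
     (hor_edges m (Suc N) \<union> ver_edges m {1..N}) edge_ends"

lemma partial_matchings_iff:
  "F \<in> partial_matchings m N S \<longleftrightarrow> F \<subseteq> hor_edges m (Suc N) \<union> ver_edges m {1..N}
     \<and> disjoint_family_on edge_ends F \<and> covered F = grid_verts m N \<union> {(i, Suc N) | i. i \<in> S}"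
  unfolding partial_matchings_def perfect_matchings_iff covered_def by simp

lemma partial_edge_cases:
  assumes "e \<in> hor_edges m (Suc N) \<union> ver_edges m {1..N}"
  obtains i j where "e = ((i, j), (i, Suc j))" "1 \<le> i" "i \<le> m" "1 \<le> j" "j \<le> N"
  | i j where "e = ((i, j), (Suc i, j))" "1 \<le> i" "Suc i \<le> m" "1 \<le> j" "j \<le> N"
  using assms unfolding hor_edges_def ver_edges_def by auto

lemma partial_matching_edge:
  assumes "F \<in> partial_matchings m N S" "e \<in> F"
  shows "e \<in> hor_edges m (Suc N) \<union> ver_edges m {1..N}"
  using assms unfolding partial_matchings_iff by auto

lemma partial_matching_left_col:
  "F \<in> partial_matchings m N S \<Longrightarrow> e \<in> F \<Longrightarrow> snd (fst e) \<le> N"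
  by (auto elim!: partial_edge_cases dest: partial_matching_edge)

lemma partial_matching_disjoint: "F \<in> partial_matchings m N S \<Longrightarrow> disjoint_family_on edge_ends F"
  unfolding partial_matchings_iff by auto

lemma partial_matching_covered:
  "F \<in> partial_matchings m N S \<Longrightarrow> covered F = grid_verts m N \<union> {(i, Suc N) | i. i \<in> S}"
  unfolding partial_matchings_iff by auto

lemma partial_matching_col_le:
  "F \<in> partial_matchings m N S \<Longrightarrow> e \<in> F \<Longrightarrow> snd (fst e) \<le> snd (snd e)"
  by (auto elim!: partial_edge_cases dest: partial_matching_edge)

lemma finite_partial_matchings: "finite (partial_matchings m N S)"
proof -
  have "partial_matchings m N S \<subseteq> Pow (hor_edges m (Suc N) \<union> ver_edges m {1..N})"
    unfolding partial_matchings_def perfect_matchings_def by auto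
  then show ?thesis
    using finite_hor_edges finite_ver_edges by (meson finite_Pow_iff finite_UnI finite_atLeastAtMost finite_subset)
qed

lemma finite_partial_matching: "F \<in> partial_matchings m N S \<Longrightarrow> finite F"
  using finite_hor_edges finite_ver_edges unfolding partial_matchings_iff
  by (meson finite_UnI finite_atLeastAtMost finite_subset)

definition vertical_dominoes :: "nat \<Rightarrow> nat set \<Rightarrow> (vtx \<times> vtx) set" where
  "vertical_dominoes j P = {((i, j), (Suc i, j)) | i. i \<in> P}"

definition horizontal_dominoes :: "nat \<Rightarrow> nat set \<Rightarrow> (vtx \<times> vtx) set" where
  "horizontal_dominoes j S = {((i, j), (i, Suc j)) | i. i \<in> S}"

lemma covered_vertical_dominoes: "covered (vertical_dominoes j P) = {(i, j) | i. i \<in> P \<union> Suc ` P}"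
  unfolding covered_def vertical_dominoes_def edge_ends_def by auto

lemma covered_horizontal_dominoes:
  "covered (horizontal_dominoes j S) = {(i, j) | i. i \<in> S} \<union> {(i, Suc j) | i. i \<in> S}"
  unfolding covered_def horizontal_dominoes_def edge_ends_def by auto

lemma disjoint_vertical_dominoes:
  "P \<inter> Suc ` P = {} \<Longrightarrow> disjoint_family_on edge_ends (vertical_dominoes j P)"
  unfolding disjoint_family_on_def vertical_dominoes_def edge_ends_def by auto

lemma disjoint_horizontal_dominoes: "disjoint_family_on edge_ends (horizontal_dominoes j S)"
  unfolding disjoint_family_on_def horizontal_dominoes_def edge_ends_def by auto

lemma extend_partial_matching:
  assumes S: "S \<subseteq> {1..m}" and S': "S' \<subseteq> {1..m}" and "S \<inter> S' = {}"
    and F0: "F0 \<in> partial_matchings m N S" and P: "P \<in> column_tilings ({1..m} - S - S')"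
  shows "F0 \<union> vertical_dominoes (Suc N) P \<union> horizontal_dominoes (Suc N) S'
    \<in> partial_matchings m (Suc N) S'"
proof -
  have F0e: "F0 \<subseteq> hor_edges m (Suc N) \<union> ver_edges m {1..N}"
    and F0d: "disjoint_family_on edge_ends F0"
    and F0c: "covered F0 = grid_verts m N \<union> {(i, Suc N) | i. i \<in> S}"
    using F0 unfolding partial_matchings_iff by auto
  have PU: "P \<union> Suc ` P = {1..m} - S - S'" and PI: "P \<inter> Suc ` P = {}"
    using P unfolding column_tilings_def by auto
  have "F0 \<subseteq> hor_edges m (Suc (Suc N)) \<union> ver_edges m {1..Suc N}"
    using F0e unfolding hor_edges_def ver_edges_def by fastforce
  moreover have "vertical_dominoes (Suc N) P \<subseteq> ver_edges m {1..Suc N}"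
    using PU unfolding vertical_dominoes_def ver_edges_def by fastforce
  moreover have "horizontal_dominoes (Suc N) S' \<subseteq> hor_edges m (Suc (Suc N))"
    using S' unfolding horizontal_dominoes_def hor_edges_def by auto
  moreover have "covered (F0 \<union> vertical_dominoes (Suc N) P \<union> horizontal_dominoes (Suc N) S')
      = grid_verts m (Suc N) \<union> {(i, Suc (Suc N)) | i. i \<in> S'}"
    unfolding covered_Un F0c covered_vertical_dominoes covered_horizontal_dominoes PU
    using S S' unfolding grid_verts_def by auto
  moreover have "disjoint_family_on edge_ends
      (F0 \<union> vertical_dominoes (Suc N) P \<union> horizontal_dominoes (Suc N) S')"
  proof (intro disjoint_family_on_Un F0d disjoint_vertical_dominoes PI disjoint_horizontal_dominoes)
    show "\<Union> (edge_ends ` F0) \<inter> \<Union> (edge_ends ` vertical_dominoes (Suc N) P) = {}"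
      using F0c covered_vertical_dominoes[of "Suc N" P] unfolding covered_def PU grid_verts_def by auto
    show "\<Union> (edge_ends ` (F0 \<union> vertical_dominoes (Suc N) P))
        \<inter> \<Union> (edge_ends ` horizontal_dominoes (Suc N) S') = {}"
      using F0c covered_vertical_dominoes[of "Suc N" P] covered_horizontal_dominoes[of "Suc N" S'] \<open>S \<inter> S' = {}\<close>
      unfolding covered_def PU grid_verts_def by auto
  qed
  ultimately show ?thesis
    unfolding partial_matchings_iff by blast
qed

definition left_part :: "nat \<Rightarrow> (vtx \<times> vtx) set \<Rightarrow> (vtx \<times> vtx) set" where
  "left_part N F = {e \<in> F. snd (fst e) \<le> N}"

definition covered_rows :: "nat \<Rightarrow> (vtx \<times> vtx) set \<Rightarrow> nat set" where
  "covered_rows j F = {i. (i, j) \<in> covered F}"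

definition vertical_rows :: "nat \<Rightarrow> (vtx \<times> vtx) set \<Rightarrow> nat set" where
  "vertical_rows j F = {i. ((i, j), (Suc i, j)) \<in> F}"

lemma left_part_extend:
  assumes "F0 \<in> partial_matchings m N S"
  shows "left_part N (F0 \<union> vertical_dominoes (Suc N) P \<union> horizontal_dominoes (Suc N) S') = F0"
  using partial_matching_left_col[OF assms]
  unfolding left_part_def vertical_dominoes_def horizontal_dominoes_def by fastforce

lemma vertical_rows_extend:
  assumes "F0 \<in> partial_matchings m N S"
  shows "vertical_rows (Suc N) (F0 \<union> vertical_dominoes (Suc N) P \<union> horizontal_dominoes (Suc N) S') = P"
  using partial_matching_left_col[OF assms]
  unfolding vertical_rows_def vertical_dominoes_def horizontal_dominoes_def by fastforce

lemma covered_rows_partial_matching: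
  "F0 \<in> partial_matchings m N S \<Longrightarrow> covered_rows (Suc N) F0 = S"
  unfolding partial_matchings_iff covered_rows_def grid_verts_def by auto

lemma horizontal_dominoes_subset:
  assumes F: "F \<in> partial_matchings m (Suc N) S'"
  shows "horizontal_dominoes (Suc N) S' \<subseteq> F"
proof
  fix e assume "e \<in> horizontal_dominoes (Suc N) S'"
  then obtain i where e: "e = ((i, Suc N), (i, Suc (Suc N)))" "i \<in> S'"
    unfolding horizontal_dominoes_def by auto
  then have "(i, Suc (Suc N)) \<in> covered F"
    using partial_matching_covered[OF F] by auto
  then obtain e' where "e' \<in> F" "(i, Suc (Suc N)) = fst e' \<or> (i, Suc (Suc N)) = snd e'"
    unfolding covered_iff by auto
  with partial_matching_edge[OF F \<open>e' \<in> F\<close>] show "e \<in> F"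
    using e by (elim partial_edge_cases) auto
qed

lemma partial_matching_split:
  assumes F: "F \<in> partial_matchings m (Suc N) S'"
  shows "F = left_part N F \<union> vertical_dominoes (Suc N) (vertical_rows (Suc N) F) \<union> horizontal_dominoes (Suc N) S'"
proof (intro equalityI subsetI)
  fix e assume "e \<in> F"
  show "e \<in> left_part N F \<union> vertical_dominoes (Suc N) (vertical_rows (Suc N) F) \<union> horizontal_dominoes (Suc N) S'"
  proof (cases "snd (fst e) \<le> N")
    case False
    with partial_matching_edge[OF F \<open>e \<in> F\<close>] show ?thesis
    proof (cases rule: partial_edge_cases)
      case (1 i j)
      then have "(i, Suc (Suc N)) \<in> covered F"
        using False \<open>e \<in> F\<close> unfolding covered_iff by force
      then have "i \<in> S'"
        unfolding partial_matching_covered[OF F] grid_verts_def by auto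
      then show ?thesis
        using 1 False unfolding horizontal_dominoes_def by auto
    next
      case (2 i j)
      then have "j = Suc N"
        using False by simp
      then show ?thesis
        using 2 \<open>e \<in> F\<close> unfolding vertical_dominoes_def vertical_rows_def by auto
    qed
  qed (use \<open>e \<in> F\<close> in \<open>simp add: left_part_def\<close>)
qed (use horizontal_dominoes_subset[OF F] in \<open>auto simp: left_part_def vertical_dominoes_def vertical_rows_def\<close>)

lemma left_part_partial_matching:
  assumes F: "F \<in> partial_matchings m (Suc N) S'"
  shows "left_part N F \<in> partial_matchings m N (covered_rows (Suc N) (left_part N F))"
  unfolding partial_matchings_iff
proof (intro conjI)
  show "left_part N F \<subseteq> hor_edges m (Suc N) \<union> ver_edges m {1..N}"
  proof
    fix e assume "e \<in> left_part N F"
    then have "e \<in> F" "snd (fst e) \<le> N"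
      by (auto simp: left_part_def)
    from partial_matching_edge[OF F this(1)] show "e \<in> hor_edges m (Suc N) \<union> ver_edges m {1..N}"
      using \<open>snd (fst e) \<le> N\<close> by (cases rule: partial_edge_cases) (auto simp: hor_edges_def ver_edges_def)
  qed
  show "disjoint_family_on edge_ends (left_part N F)"
    using partial_matching_disjoint[OF F] by (rule disjoint_family_on_mono[rotated]) (auto simp: left_part_def)
  show "covered (left_part N F) = grid_verts m N \<union> {(i, Suc N) | i. i \<in> covered_rows (Suc N) (left_part N F)}"
  proof (intro equalityI subsetI)
    fix x assume x: "x \<in> covered (left_part N F)"
    then obtain e where e: "e \<in> F" "snd (fst e) \<le> N" "x = fst e \<or> x = snd e"
      unfolding covered_iff left_part_def by auto
    have "x \<in> grid_verts m (Suc N)"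
      using partial_matching_edge[OF F e(1)] partial_matching_covered[OF F] e(2,3) covered_iff[of x F]
      by (fastforce elim!: partial_edge_cases simp: grid_verts_def)
    then show "x \<in> grid_verts m N \<union> {(i, Suc N) | i. i \<in> covered_rows (Suc N) (left_part N F)}"
      using x unfolding grid_verts_def covered_rows_def by (cases x) (auto simp: le_Suc_eq)
  next
    fix x assume x: "x \<in> grid_verts m N \<union> {(i, Suc N) | i. i \<in> covered_rows (Suc N) (left_part N F)}"
    show "x \<in> covered (left_part N F)"
    proof (cases "x \<in> grid_verts m N")
      case True
      then have "x \<in> covered F" and "snd x \<le> N"
        unfolding partial_matching_covered[OF F] grid_verts_def by auto
      then obtain e where "e \<in> F" "x = fst e \<or> x = snd e"
        unfolding covered_iff by auto
      with \<open>snd x \<le> N\<close> partial_matching_col_le[OF F] show ?thesis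
        unfolding covered_iff left_part_def by fastforce
    qed (use x in \<open>auto simp: covered_rows_def\<close>)
  qed
qed

lemma covered_rows_left_part_subset:
  assumes F: "F \<in> partial_matchings m (Suc N) S'"
  shows "covered_rows (Suc N) (left_part N F) \<subseteq> {1..m}"
proof
  fix i assume "i \<in> covered_rows (Suc N) (left_part N F)"
  then have "(i, Suc N) \<in> covered F"
    unfolding covered_rows_def covered_iff left_part_def by blast
  then show "i \<in> {1..m}"
    unfolding partial_matching_covered[OF F] grid_verts_def by auto
qed

lemma not_covered_by_left_part:
  assumes F: "F \<in> partial_matchings m (Suc N) S'"
    and e: "e \<in> F" "\<not> snd (fst e) \<le> N" "(i, Suc N) = fst e \<or> (i, Suc N) = snd e"
  shows "i \<notin> covered_rows (Suc N) (left_part N F)"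
proof
  assume "i \<in> covered_rows (Suc N) (left_part N F)"
  then obtain e' where "e' \<in> F" "snd (fst e') \<le> N" "(i, Suc N) = fst e' \<or> (i, Suc N) = snd e'"
    unfolding covered_rows_def covered_iff left_part_def by auto
  then have "e' = e"
    using disjoint_family_on_common_elem[OF partial_matching_disjoint[OF F], of e' e "(i, Suc N)"] e
    by (auto simp: edge_ends_def)
  then show False
    using e(2) \<open>snd (fst e') \<le> N\<close> by simp
qed

lemma covered_rows_left_part_disjoint:
  assumes F: "F \<in> partial_matchings m (Suc N) S'"
  shows "covered_rows (Suc N) (left_part N F) \<inter> S' = {}"
  using horizontal_dominoes_subset[OF F] not_covered_by_left_part[OF F]
  unfolding horizontal_dominoes_def by fastforce

lemma vertical_rows_disjoint:
  assumes F: "F \<in> partial_matchings m (Suc N) S'"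
  shows "vertical_rows (Suc N) F \<inter> Suc ` vertical_rows (Suc N) F = {}"
proof (rule ccontr)
  assume "vertical_rows (Suc N) F \<inter> Suc ` vertical_rows (Suc N) F \<noteq> {}"
  then obtain i where "((i, Suc N), (Suc i, Suc N)) \<in> F" "((Suc i, Suc N), (Suc (Suc i), Suc N)) \<in> F"
    unfolding vertical_rows_def by auto
  then have "((i, Suc N), (Suc i, Suc N)) = ((Suc i, Suc N), (Suc (Suc i), Suc N))"
    by (rule disjoint_family_on_common_elem[OF partial_matching_disjoint[OF F], where x = "(Suc i, Suc N)"]) (auto simp: edge_ends_def)
  then show False
    by simp
qed

lemma vertical_rows_cover:
  assumes F: "F \<in> partial_matchings m (Suc N) S'"
  shows "vertical_rows (Suc N) F \<union> Suc ` vertical_rows (Suc N) F = {1..m} - covered_rows (Suc N) (left_part N F) - S'"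
proof (intro equalityI subsetI)
  fix k assume "k \<in> vertical_rows (Suc N) F \<union> Suc ` vertical_rows (Suc N) F"
  then obtain i where h: "((i, Suc N), (Suc i, Suc N)) \<in> F" and k: "k = i \<or> k = Suc i"
    unfolding vertical_rows_def by auto
  then have "(k, Suc N) \<in> covered F"
    unfolding covered_iff by force
  then have "k \<in> {1..m}"
    unfolding partial_matching_covered[OF F] grid_verts_def by auto
  moreover have "k \<notin> covered_rows (Suc N) (left_part N F)"
    using not_covered_by_left_part[OF F h] k by auto
  moreover have "k \<notin> S'"
  proof
    assume "k \<in> S'"
    then have "((k, Suc N), (k, Suc (Suc N))) \<in> F"
      using horizontal_dominoes_subset[OF F] unfolding horizontal_dominoes_def by auto
    then have "((k, Suc N), (k, Suc (Suc N))) = ((i, Suc N), (Suc i, Suc N))"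
      by (rule disjoint_family_on_common_elem[OF partial_matching_disjoint[OF F] _ h, where x = "(k, Suc N)"])
        (use k in \<open>auto simp: edge_ends_def\<close>)
    then show False
      by simp
  qed
  ultimately show "k \<in> {1..m} - covered_rows (Suc N) (left_part N F) - S'"
    by simp
next
  fix k assume k: "k \<in> {1..m} - covered_rows (Suc N) (left_part N F) - S'"
  then have "(k, Suc N) \<in> covered F"
    unfolding partial_matching_covered[OF F] grid_verts_def by auto
  then obtain e where e: "e \<in> F" "(k, Suc N) = fst e \<or> (k, Suc N) = snd e"
    unfolding covered_iff by auto
  have "e \<notin> left_part N F"
    using e k unfolding left_part_def covered_rows_def covered_iff by (cases e) fastforce
  then have "e \<in> vertical_dominoes (Suc N) (vertical_rows (Suc N) F) \<or> e \<in> horizontal_dominoes (Suc N) S'"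
    using partial_matching_split[OF F] e(1) by blast
  then show "k \<in> vertical_rows (Suc N) F \<union> Suc ` vertical_rows (Suc N) F"
    using e k unfolding vertical_dominoes_def horizontal_dominoes_def by auto
qed

(* Vertical edges in column j get the weight \<sigma> j; the weight 0 deletes them. *)
definition column_weight :: "(nat \<Rightarrow> real) \<Rightarrow> vtx \<times> vtx \<Rightarrow> real" where
  "column_weight \<sigma> e = (if snd (fst e) = snd (snd e) then \<sigma> (snd (fst e)) else 1)"

definition partial_weight :: "nat \<Rightarrow> (nat \<Rightarrow> real) \<Rightarrow> nat \<Rightarrow> nat set \<Rightarrow> real" where
  "partial_weight m \<sigma> N S = (\<Sum>F\<in>partial_matchings m N S. \<Prod>e\<in>F. column_weight \<sigma> e)"

lemma prod_column_weight_extend: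
  assumes F0: "F0 \<in> partial_matchings m N S" and "finite P" "finite S'"
  shows "(\<Prod>e\<in>F0 \<union> vertical_dominoes (Suc N) P \<union> horizontal_dominoes (Suc N) S'. column_weight \<sigma> e)
    = (\<Prod>e\<in>F0. column_weight \<sigma> e) * \<sigma> (Suc N) ^ card P"
proof -
  have vd: "vertical_dominoes (Suc N) P = (\<lambda>i. ((i, Suc N), (Suc i, Suc N))) ` P"
    unfolding vertical_dominoes_def by auto
  have hd: "horizontal_dominoes (Suc N) S' = (\<lambda>i. ((i, Suc N), (i, Suc (Suc N)))) ` S'"
    unfolding horizontal_dominoes_def by auto
  have "(\<Prod>e\<in>vertical_dominoes (Suc N) P. column_weight \<sigma> e) = \<sigma> (Suc N) ^ card P"
    unfolding vd using \<open>finite P\<close> by (simp add: prod.reindex inj_on_def column_weight_def)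
  moreover have "(\<Prod>e\<in>horizontal_dominoes (Suc N) S'. column_weight \<sigma> e) = 1"
    unfolding hd by (rule prod.neutral) (auto simp: column_weight_def)
  moreover have "F0 \<inter> vertical_dominoes (Suc N) P = {}"
    and "(F0 \<union> vertical_dominoes (Suc N) P) \<inter> horizontal_dominoes (Suc N) S' = {}"
    using partial_matching_left_col[OF F0] unfolding vd hd by fastforce+
  ultimately show ?thesis
    using finite_partial_matching[OF F0] \<open>finite P\<close> \<open>finite S'\<close> unfolding vd hd
    by (simp add: prod.union_disjoint)
qed

(* A matching of the first N + 1 columns (plus the cells of column N + 2 in the rows S') is
   cut into its part left of column N + 1, whose protruding rows S are those of column N + 1 matched
   to the left, the vertical dominoes of column N + 1, and the horizontal edges in the rows S'. *)
lemma bij_betw_extend_partial_matchings: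
  assumes "S' \<subseteq> {1..m}"
  shows "bij_betw (\<lambda>(S, F0, P). F0 \<union> vertical_dominoes (Suc N) P \<union> horizontal_dominoes (Suc N) S')
    (SIGMA S:{S. S \<subseteq> {1..m} \<and> S \<inter> S' = {}}. partial_matchings m N S \<times> column_tilings ({1..m} - S - S'))
    (partial_matchings m (Suc N) S')"
proof (rule bij_betw_byWitness[where
      f' = "\<lambda>F. (covered_rows (Suc N) (left_part N F), left_part N F, vertical_rows (Suc N) F)"])
  show "\<forall>F\<in>partial_matchings m (Suc N) S'.
      (\<lambda>(S, F0, P). F0 \<union> vertical_dominoes (Suc N) P \<union> horizontal_dominoes (Suc N) S')
        (covered_rows (Suc N) (left_part N F), left_part N F, vertical_rows (Suc N) F) = F"
    using partial_matching_split by simp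
  show "(\<lambda>F. (covered_rows (Suc N) (left_part N F), left_part N F, vertical_rows (Suc N) F))
      ` partial_matchings m (Suc N) S'
    \<subseteq> (SIGMA S:{S. S \<subseteq> {1..m} \<and> S \<inter> S' = {}}. partial_matchings m N S \<times> column_tilings ({1..m} - S - S'))"
  proof (rule image_subsetI)
    fix F assume F: "F \<in> partial_matchings m (Suc N) S'"
    show "(covered_rows (Suc N) (left_part N F), left_part N F, vertical_rows (Suc N) F)
      \<in> (SIGMA S:{S. S \<subseteq> {1..m} \<and> S \<inter> S' = {}}. partial_matchings m N S \<times> column_tilings ({1..m} - S - S'))"
      using left_part_partial_matching[OF F] covered_rows_left_part_subset[OF F]
        covered_rows_left_part_disjoint[OF F] vertical_rows_disjoint[OF F] vertical_rows_cover[OF F]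
      unfolding column_tilings_def by simp
  qed
qed (use assms extend_partial_matching in
      \<open>auto simp: left_part_extend vertical_rows_extend covered_rows_partial_matching\<close>)

lemma partial_weight_Suc:
  assumes S': "S' \<subseteq> {1..m}"
  shows "partial_weight m \<sigma> (Suc N) S'
    = (\<Sum>S\<in>Pow {1..m}. partial_weight m \<sigma> N S * transfer m (\<sigma> (Suc N)) S S')"
proof -
  define R where "R = {1..m}"
  define Ss where "Ss = {S. S \<subseteq> R \<and> S \<inter> S' = {}}"
  define D where "D = (SIGMA S:Ss. partial_matchings m N S \<times> column_tilings (R - S - S'))"
  have fin: "finite R" "finite Ss" "finite (column_tilings (R - S - S'))" for S
    unfolding R_def Ss_def by (auto intro: finite_column_tilings)
  have "partial_weight m \<sigma> (Suc N) S' = (\<Sum>(S, F0, P)\<in>D.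
      \<Prod>e\<in>F0 \<union> vertical_dominoes (Suc N) P \<union> horizontal_dominoes (Suc N) S'. column_weight \<sigma> e)"
    using sum.reindex_bij_betw[OF bij_betw_extend_partial_matchings[OF S', of N], of "prod (column_weight \<sigma>)"]
    unfolding partial_weight_def D_def Ss_def R_def by (simp add: case_prod_unfold)
  also have "\<dots> = (\<Sum>(S, F0, P)\<in>D. (\<Prod>e\<in>F0. column_weight \<sigma> e) * \<sigma> (Suc N) ^ card P)"
  proof (rule sum.cong[OF refl], clarify)
    fix S F0 P assume "(S, F0, P) \<in> D"
    then have "F0 \<in> partial_matchings m N S" "finite P"
      unfolding D_def using fin(1) column_tilings_subset by (auto intro: finite_subset[of P R])
    then show "(\<Prod>e\<in>F0 \<union> vertical_dominoes (Suc N) P \<union> horizontal_dominoes (Suc N) S'. column_weight \<sigma> e)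
        = (\<Prod>e\<in>F0. column_weight \<sigma> e) * \<sigma> (Suc N) ^ card P"
      using prod_column_weight_extend finite_subset[OF S'] by auto
  qed
  also have "\<dots> = (\<Sum>S\<in>Ss. partial_weight m \<sigma> N S * transfer m (\<sigma> (Suc N)) S S')"
    unfolding D_def using fin finite_partial_matchings S'
    by (simp add: sum.Sigma[symmetric] sum.cartesian_product[symmetric] partial_weight_def
        transfer_def Ss_def R_def sum_product)
  also have "\<dots> = (\<Sum>S\<in>Pow R. partial_weight m \<sigma> N S * transfer m (\<sigma> (Suc N)) S S')"
    using fin(1) unfolding Ss_def by (intro sum.mono_neutral_left) (auto simp: transfer_def)
  finally show ?thesis
    unfolding R_def .
qed

lemma partial_matchings_empty:
  "partial_matchings m N {} = perfect_matchings (grid_verts m N) (hor_edges m N \<union> ver_edges m {1..N}) edge_ends"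
proof -
  have "{e \<in> hor_edges m (Suc N) \<union> ver_edges m {1..N}. edge_ends e \<subseteq> grid_verts m N}
      = hor_edges m N \<union> ver_edges m {1..N}"
    unfolding hor_edges_def ver_edges_def edge_ends_def grid_verts_def by auto
  then show ?thesis
    unfolding partial_matchings_def by (simp add: perfect_matchings_restrict_edges[of _ "hor_edges m (Suc N) \<union> _"])
qed

lemma partial_weight_0: "partial_weight m \<sigma> 0 S = (if S = {} then 1 else 0)"
proof -
  have "partial_matchings m 0 S = (if S = {} then {{}} else {})"
    unfolding partial_matchings_def perfect_matchings_def grid_verts_def hor_edges_def ver_edges_def
    by auto
  then show ?thesis
    unfolding partial_weight_def by simp
qed

lemma partial_weight_block:
  assumes "\<forall>j\<in>{Suc a..a + k}. \<sigma> j = s" "S \<subseteq> {1..m}"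
  shows "partial_weight m \<sigma> (a + k) S
    = (\<Sum>T\<in>Pow {1..m}. partial_weight m \<sigma> a T * mat_pow (Pow {1..m}) (transfer m s) k T S)"
  using assms
proof (induction k arbitrary: S)
  case 0
  then show ?case
    by (simp add: mat_one_def sum.delta' if_distrib[of "times _"] cong: if_cong)
next
  case (Suc k)
  have "partial_weight m \<sigma> (a + Suc k) S
      = (\<Sum>U\<in>Pow {1..m}. partial_weight m \<sigma> (a + k) U * transfer m s U S)"
    using partial_weight_Suc[OF Suc.prems(2), of \<sigma> "a + k"] Suc.prems(1) by simp
  also have "\<dots> = (\<Sum>U\<in>Pow {1..m}. \<Sum>T\<in>Pow {1..m}.
      partial_weight m \<sigma> a T * mat_pow (Pow {1..m}) (transfer m s) k T U * transfer m s U S)"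
    using Suc.IH Suc.prems(1) by (simp add: sum_distrib_right)
  also have "\<dots> = (\<Sum>T\<in>Pow {1..m}. partial_weight m \<sigma> a T * mat_pow (Pow {1..m}) (transfer m s) (Suc k) T S)"
    using Suc.prems(2) by (subst sum.swap) (auto simp: mat_mult_def sum_distrib_left mult.assoc intro!: sum.cong)
  finally show ?case .
qed

section \<open>The signed matching sums of the graphs G(m,n)\<close>

definition transfer_entry :: "nat \<Rightarrow> int \<Rightarrow> real" where
  "transfer_entry m n = mat_zpow (Pow {1..m}) (transfer m 1) (transfer_inv m) n {} {}"

lemma transfer_inv_eq:
  "S \<subseteq> {1..m} \<Longrightarrow> T \<subseteq> {1..m}
    \<Longrightarrow> transfer_inv m S T = transfer m (-1) ({1..m} - S) ({1..m} - T)"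
  by (simp add: transfer_inv_def)

lemma mat_pow_transfer_inv:
  assumes "S \<subseteq> {1..m}" "U \<subseteq> {1..m}"
  shows "mat_pow (Pow {1..m}) (transfer_inv m) k S U
    = mat_pow (Pow {1..m}) (transfer m (-1)) k ({1..m} - S) ({1..m} - U)"
  using assms(2)
proof (induction k arbitrary: U)
  case 0
  then show ?case
    using assms(1) by (auto simp: mat_one_def)
next
  case (Suc k)
  have "mat_pow (Pow {1..m}) (transfer_inv m) (Suc k) S U
      = (\<Sum>T\<in>Pow {1..m}. mat_pow (Pow {1..m}) (transfer_inv m) k S T * transfer_inv m T U)"
    using assms(1) Suc.prems by (simp add: mat_mult_def)
  also have "\<dots> = (\<Sum>T\<in>Pow {1..m}. mat_pow (Pow {1..m}) (transfer m (-1)) k ({1..m} - S) ({1..m} - T)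
      * transfer m (-1) ({1..m} - T) ({1..m} - U))"
  proof (intro sum.cong refl)
    fix T assume "T \<in> Pow {1..m}"
    then show "mat_pow (Pow {1..m}) (transfer_inv m) k S T * transfer_inv m T U
        = mat_pow (Pow {1..m}) (transfer m (-1)) k ({1..m} - S) ({1..m} - T)
          * transfer m (-1) ({1..m} - T) ({1..m} - U)"
      using Suc.IH[of T] Suc.prems by (simp add: transfer_inv_eq)
  qed
  also have "\<dots> = (\<Sum>T\<in>Pow {1..m}. mat_pow (Pow {1..m}) (transfer m (-1)) k ({1..m} - S) T
      * transfer m (-1) T ({1..m} - U))"
    by (rule sum.reindex_bij_witness[of _ "\<lambda>T. {1..m} - T" "\<lambda>T. {1..m} - T"]) auto
  also have "\<dots> = mat_pow (Pow {1..m}) (transfer m (-1)) (Suc k) ({1..m} - S) ({1..m} - U)"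
    by (simp add: mat_mult_def)
  finally show ?case .
qed

lemma MG_positive:
  assumes "n \<ge> 1"
  shows "real_of_int (MG m n) = transfer_entry m n"
proof -
  define N where "N = nat n"
  have "real_of_int (MG m n) = (\<Sum>F\<in>partial_matchings m N {}. \<Prod>e\<in>F. column_weight (\<lambda>_. 1) e)"
    using assms unfolding MG_def signed_matching_sum_def partial_matchings_empty
    by (simp add: G_verts_def G_edges_def G_cols_def G_sign_def column_weight_def N_def)
  also have "\<dots> = (\<Sum>T\<in>Pow {1..m}. partial_weight m (\<lambda>_. 1) 0 T * mat_pow (Pow {1..m}) (transfer m 1) N T {})"
    using partial_weight_block[of 0 N "\<lambda>_. 1" 1 "{}" m] unfolding partial_weight_def by simp
  also have "\<dots> = transfer_entry m n"
    using assms by (simp add: partial_weight_0 transfer_entry_def mat_zpow_def N_def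
        if_distrib[of "\<lambda>x. x * _"] sum.delta cong: if_cong)
  finally show ?thesis .
qed

lemma partial_weight_negative:
  assumes "\<forall>j. \<sigma> j = (if 2 \<le> j \<and> j \<le> Suc k then -1 else 0)"
  shows "partial_weight m \<sigma> (Suc (Suc k)) {} = mat_pow (Pow {1..m}) (transfer m (-1)) k {1..m} {1..m}"
proof -
  have first: "partial_weight m \<sigma> (Suc 0) U = (if U = {1..m} then 1 else 0)" if "U \<subseteq> {1..m}" for U
    using partial_weight_Suc[OF that, of \<sigma> 0] that assms
    by (auto simp: partial_weight_0 transfer_zero if_distrib[of "\<lambda>x. x * _"] sum.delta cong: if_cong)
  have middle: "partial_weight m \<sigma> (Suc k) S = mat_pow (Pow {1..m}) (transfer m (-1)) k {1..m} S"
    if "S \<subseteq> {1..m}" for S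
    using partial_weight_block[of 1 k \<sigma> "-1" S m] that assms
    by (simp add: first if_distrib[of "\<lambda>x. x * _"] sum.delta cong: if_cong)
  show ?thesis
    using partial_weight_Suc[of "{}" m \<sigma> "Suc k"] assms
    by (simp add: middle transfer_zero if_distrib[of "\<lambda>x. _ * x"] sum.delta' cong: if_cong)
qed

lemma MG_nonpositive:
  assumes "n \<le> 0"
  shows "real_of_int (MG m n) = transfer_entry m n"
proof -
  define k where "k = nat (- n)"
  define \<sigma> where "\<sigma> j = (if 2 \<le> j \<and> j \<le> Suc k then -1 else (0::real))" for j
  define E where "E = hor_edges m (Suc (Suc k)) \<union> ver_edges m {1..Suc (Suc k)}"
  have cols: "G_cols n = Suc (Suc k)" "nat (2 - n) = Suc (Suc k)" "nat (1 - n) = Suc k"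
    using assms unfolding G_cols_def k_def by auto
  have sign: "(if e \<in> G_edges m n then real_of_int (G_sign m n e) else 0) = column_weight \<sigma> e"
    if "e \<in> E" for e
    using that assms unfolding E_def G_edges_def G_sign_def cols column_weight_def \<sigma>_def
    by (auto simp: hor_edges_def ver_edges_def)
  have "real_of_int (MG m n) = (\<Sum>F\<in>perfect_matchings (grid_verts m (Suc (Suc k))) (G_edges m n) edge_ends.
      \<Prod>e\<in>F. real_of_int (G_sign m n e))"
    unfolding MG_def signed_matching_sum_def G_verts_def cols by simp
  also have "\<dots> = (\<Sum>F\<in>perfect_matchings (grid_verts m (Suc (Suc k))) E edge_ends.
      \<Prod>e\<in>F. if e \<in> G_edges m n then real_of_int (G_sign m n e) else 0)"
  proof (rule sum_perfect_matchings_subgraph)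
    show "finite E"
      unfolding E_def by (simp add: finite_hor_edges finite_ver_edges)
    show "G_edges m n \<subseteq> E"
      using assms unfolding E_def G_edges_def cols by (auto simp: ver_edges_def)
  qed
  also have "\<dots> = partial_weight m \<sigma> (Suc (Suc k)) {}"
    unfolding partial_weight_def partial_matchings_empty E_def[symmetric]
  proof (intro sum.cong prod.cong refl)
    fix F e assume "F \<in> perfect_matchings (grid_verts m (Suc (Suc k))) E edge_ends" "e \<in> F"
    then show "(if e \<in> G_edges m n then real_of_int (G_sign m n e) else 0) = column_weight \<sigma> e"
      by (intro sign) (auto simp: perfect_matchings_iff)
  qed
  also have "\<dots> = mat_pow (Pow {1..m}) (transfer_inv m) k {} {}"
    using partial_weight_negative[of \<sigma> k m] mat_pow_transfer_inv[of "{}" m "{}" k]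
    by (simp add: \<sigma>_def)
  also have "\<dots> = transfer_entry m n"
    using assms unfolding transfer_entry_def mat_zpow_def k_def by auto
  finally show ?thesis .
qed

lemma inj_on_edge_ends: "inj_on edge_ends (hor_edges m N \<union> ver_edges m C)"
proof (rule inj_onI)
  fix e e' assume e: "e \<in> hor_edges m N \<union> ver_edges m C" and e': "e' \<in> hor_edges m N \<union> ver_edges m C"
    and eq: "edge_ends e = edge_ends e'"
  have diag: "fst (snd x) + snd (snd x) = Suc (fst (fst x) + snd (fst x))"
    if "x \<in> hor_edges m N \<union> ver_edges m C" for x
    using that unfolding hor_edges_def ver_edges_def by auto
  have "(fst e = fst e' \<and> snd e = snd e') \<or> (fst e = snd e' \<and> snd e = fst e')"
    using eq unfolding edge_ends_def by (simp add: doubleton_eq_iff)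
  then show "e = e'"
    using diag[OF e] diag[OF e'] by (auto simp: prod_eq_iff)
qed

lemma edge_ends_image_grid_edges: "edge_ends ` (hor_edges m N \<union> ver_edges m {1..N}) = dominoes m N"
proof (intro equalityI subsetI)
  fix d assume "d \<in> edge_ends ` (hor_edges m N \<union> ver_edges m {1..N})"
  then obtain i j i' j' where "d = {(i, j), (i', j')}" "(i, j) \<in> grid_verts m N" "(i', j') \<in> grid_verts m N"
    "(i' = i \<and> j' = j + 1) \<or> (i' = i + 1 \<and> j' = j)"
    unfolding hor_edges_def ver_edges_def edge_ends_def grid_verts_def by auto
  then show "d \<in> dominoes m N"
    unfolding dominoes_def by blast
next
  fix d assume "d \<in> dominoes m N"
  then obtain i j i' j' where d: "d = {(i, j), (i', j')}" "(i, j) \<in> grid_verts m N"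
    "(i', j') \<in> grid_verts m N" "(i' = i \<and> j' = j + 1) \<or> (i' = i + 1 \<and> j' = j)"
    unfolding dominoes_def by blast
  then have "((i, j), (i', j')) \<in> hor_edges m N \<union> ver_edges m {1..N}"
    unfolding hor_edges_def ver_edges_def grid_verts_def by auto
  moreover have "d = edge_ends ((i, j), (i', j'))"
    unfolding d(1) edge_ends_def by simp
  ultimately show "d \<in> edge_ends ` (hor_edges m N \<union> ver_edges m {1..N})"
    by blast
qed

lemma card_domino_tilings:
  "card (domino_tilings m N)
    = card (perfect_matchings (grid_verts m N) (hor_edges m N \<union> ver_edges m {1..N}) edge_ends)"
proof -
  have "domino_tilings m N = {D. D \<subseteq> edge_ends ` (hor_edges m N \<union> ver_edges m {1..N})
      \<and> disjoint D \<and> \<Union>D = grid_verts m N}"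
    unfolding domino_tilings_def edge_ends_image_grid_edges disjoint_def by simp
  then show ?thesis
    using bij_betw_same_card[OF bij_betw_perfect_matchings_image[OF inj_on_edge_ends]] by simp
qed

lemma MG_eq_T_pos:
  assumes "n \<ge> 1"
  shows "MG m n = T_pos m n"
proof -
  have "MG m n = (\<Sum>F\<in>perfect_matchings (grid_verts m (nat n))
      (hor_edges m (nat n) \<union> ver_edges m {1..nat n}) edge_ends. 1)"
    using assms unfolding MG_def signed_matching_sum_def
    by (simp add: G_verts_def G_edges_def G_cols_def G_sign_def)
  then show ?thesis
    unfolding T_pos_def card_domino_tilings by simp
qed

lemma MG_eq_transfer_entry: "real_of_int (MG m n) = transfer_entry m n"
  using MG_positive MG_nonpositive by (cases "n \<ge> 1") auto

lemma transfer_entry_0: "transfer_entry m 0 = 1"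
  unfolding transfer_entry_def mat_zpow_def by (simp add: mat_one_def)

lemma transfer_inv_empty:
  "T \<subseteq> {1..m} \<Longrightarrow> transfer_inv m {} T = (if T = {1..m} then 1 else 0)"
  by (auto simp: transfer_inv_def transfer_def column_tilings_empty)

lemma transfer_entry_minus_2: "transfer_entry m (-2) = 1"
proof -
  have "transfer_entry m (-2) = (\<Sum>T\<in>Pow {1..m}. transfer_inv m {} T * transfer_inv m T {})"
    unfolding transfer_entry_def mat_zpow_def
    by (simp add: numeral_2_eq_2 mat_mult_def mat_one_def if_distrib[of "\<lambda>x. x * _"] sum.delta cong: if_cong)
  also have "\<dots> = (\<Sum>T\<in>Pow {1..m}. if T = {1..m} then 1 else 0)"
    by (intro sum.cong refl) (auto simp: transfer_inv_empty transfer_inv_sym[of m _ "{}"])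
  finally show ?thesis
    by simp
qed

lemma transfer_entry_annihilated: "\<exists>q D. q 0 \<noteq> 0 \<and> annihilates q D (transfer_entry m)"
  using mat_zpow_entry_add[OF _ transfer_inv_mult_transfer, where i = "{}"]
  unfolding transfer_entry_def by (intro annihilated_if_finite_rank[of "Pow {1..m}"]) auto

lemma T_pos_eq_transfer_entry: "k \<ge> 1 \<Longrightarrow> real_of_int (T_pos m k) = transfer_entry m k"
  using MG_eq_T_pos MG_eq_transfer_entry by metis

lemma lin_rec_on_T_pos_iff:
  "lin_rec_on d c {1..} (\<lambda>k. real_of_int (T_pos m k)) \<longleftrightarrow> lin_rec_on d c {1..} (transfer_entry m)"
  using T_pos_eq_transfer_entry by (intro lin_rec_on_cong) auto

lemma transfer_entry_admissible_rec: "\<exists>d c. admissible_rec d c \<and> lin_rec_on d c UNIV (transfer_entry m)"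
proof -
  obtain q D where "q 0 \<noteq> 0" "annihilates q D (transfer_entry m)"
    using transfer_entry_annihilated by blast
  then show ?thesis
    using annihilated_imp_admissible_rec[of q D _ 0] transfer_entry_0 by simp
qed

lemma transfer_entry_lin_rec_extend:
  "admissible_rec d c \<Longrightarrow> lin_rec_on d c {1..} (transfer_entry m) \<Longrightarrow> lin_rec_on d c UNIV (transfer_entry m)"
  using transfer_entry_annihilated lin_rec_on_extend by blast

lemma T_pos_admissible_rec: "\<exists>d c. admissible_rec d c \<and> lin_rec_on d c {1..} (\<lambda>k. real_of_int (T_pos m k))"
  using transfer_entry_admissible_rec lin_rec_on_subset lin_rec_on_T_pos_iff by (metis top_greatest)

lemma MG_eq_backward_extension:
  assumes "admissible_rec d c" "lin_rec_on d c {1..} (\<lambda>k. real_of_int (T_pos m k))"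
    and "lin_rec_on d c UNIV f" "\<forall>k\<ge>1. f k = real_of_int (T_pos m k)"
  shows "real_of_int (MG m n) = f n"
proof -
  have "lin_rec_on d c UNIV (transfer_entry m)"
    using assms(1,2) by (simp add: lin_rec_on_T_pos_iff transfer_entry_lin_rec_extend)
  then show ?thesis
    using lin_rec_on_unique[OF assms(1) _ assms(3)] assms(4)
    by (simp add: MG_eq_transfer_entry T_pos_eq_transfer_entry)
qed

lemma MG_0: "MG m 0 = 1"
  using MG_eq_transfer_entry[of m 0] transfer_entry_0 by simp

lemma MG_minus_2: "MG m (-2) = 1"
  using MG_eq_transfer_entry[of m "-2"] transfer_entry_minus_2 by simp

theorem mainTheorem2:
  fixes m :: nat
  assumes "m \<ge> 1"
  shows "(\<forall>n::int. n \<ge> 1 \<longrightarrow> MG m n = T_pos m n)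
    \<and> (\<exists>d c. admissible_rec d c \<and> lin_rec_on d c {1..} (\<lambda>k. real_of_int (T_pos m k)))
    \<and> (\<forall>d c f. admissible_rec d c
          \<longrightarrow> lin_rec_on d c {1..} (\<lambda>k. real_of_int (T_pos m k))
          \<longrightarrow> lin_rec_on d c UNIV f
          \<longrightarrow> (\<forall>k\<ge>1. f k = real_of_int (T_pos m k))
          \<longrightarrow> (\<forall>n::int. n \<le> 0 \<longrightarrow> real_of_int (MG m n) = f n))
    \<and> MG m 0 = 1 \<and> MG m (-2) = 1"
proof (intro conjI allI impI)
  show "MG m n = T_pos m n" if "n \<ge> 1" for n
    using that by (rule MG_eq_T_pos)
  show "\<exists>d c. admissible_rec d c \<and> lin_rec_on d c {1..} (\<lambda>k. real_of_int (T_pos m k))"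
    by (rule T_pos_admissible_rec)
  show "real_of_int (MG m n) = f n"
    if "admissible_rec d c" "lin_rec_on d c {1..} (\<lambda>k. real_of_int (T_pos m k))"
      "lin_rec_on d c UNIV f" "\<forall>k\<ge>1. f k = real_of_int (T_pos m k)" "n \<le> 0" for d c f n
    using that(1-4) by (rule MG_eq_backward_extension)
  show "MG m 0 = 1"
    by (rule MG_0)
  show "MG m (-2) = 1"
    by (rule MG_minus_2)
qed

end
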